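(* Let $A=(a_{ij})_{i,j\in I}$ be a Borcherds–Cartan matrix and $\tilde A$ the associated generalized Cartan matrix. If $A$ is symmetrizable, then so is $\tilde A$.
   Context: $I$ is a countable set; $A$ is a Borcherds–Cartan matrix: $a_{ii}=2$ or $a_{ii}\in\mathbb Z_{\le0}$; $a_{ij}\in\mathbb Z_{\le0}$ for $i\neq j$; $a_{ij}=0\iff a_{ji}=0$ for $i\ne j$. $I^{re}=\{i:a_{ii}=2\}$, $I^{im}=I\setminus I^{re}$. A matrix $M$ indexed by a set $J$ is symmetrizable if there is a diagonal matrix $D=\mathrm{diag}(d_j)_{j\in J}$ with $d_j\in\mathbb Z_{>0}$ such that $DM$ is symmetric. $\tilde I=\{(i,1)\}_{i\in I^{re}}\sqcup\{(i,m)\}_{i\in I^{im},m\in\mathbb Z_{\ge1}}$ and $\tilde A=(\tilde a_{(i,m),(j,n)})_{(i,m),(j,n)\in\tilde I}$ with $\tilde a_{(i,m),(i,m)}=2$ and $\tilde a_{(i,m),(j,n)}=a_{ij}$ for $(i,m)\neq(j,n)$. *)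

theory Defs
  imports Main "HOL-Library.Countable_Set"
begin

text \<open>Matrices indexed by a set J are functions J -> J -> int (values outside J irrelevant).\<close>

definition borcherds_cartan :: "'i set \<Rightarrow> ('i \<Rightarrow> 'i \<Rightarrow> int) \<Rightarrow> bool" where
  "borcherds_cartan I A \<longleftrightarrow>
     (\<forall>i\<in>I. A i i = 2 \<or> A i i \<le> 0) \<and>
     (\<forall>i\<in>I. \<forall>j\<in>I. i \<noteq> j \<longrightarrow> A i j \<le> 0) \<and>
     (\<forall>i\<in>I. \<forall>j\<in>I. i \<noteq> j \<longrightarrow> (A i j = 0 \<longleftrightarrow> A j i = 0))"

definition I_re :: "'i set \<Rightarrow> ('i \<Rightarrow> 'i \<Rightarrow> int) \<Rightarrow> 'i set" where
  "I_re I A = {i\<in>I. A i i = 2}"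

definition I_im :: "'i set \<Rightarrow> ('i \<Rightarrow> 'i \<Rightarrow> int) \<Rightarrow> 'i set" where
  "I_im I A = I - I_re I A"

definition symmetrizable :: "'j set \<Rightarrow> ('j \<Rightarrow> 'j \<Rightarrow> int) \<Rightarrow> bool" where
  "symmetrizable J M \<longleftrightarrow>
     (\<exists>d :: 'j \<Rightarrow> int. (\<forall>j\<in>J. d j > 0) \<and>
        (\<forall>i\<in>J. \<forall>j\<in>J. d i * M i j = d j * M j i))"

definition tilde_I :: "'i set \<Rightarrow> ('i \<Rightarrow> 'i \<Rightarrow> int) \<Rightarrow> ('i \<times> nat) set" where
  "tilde_I I A = {(i, 1) | i. i \<in> I_re I A} \<union> {(i, m) | i m. i \<in> I_im I A \<and> m \<ge> 1}"

definition tilde_A :: "('i \<Rightarrow> 'i \<Rightarrow> int) \<Rightarrow> ('i \<times> nat) \<Rightarrow> ('i \<times> nat) \<Rightarrow> int" where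
  "tilde_A A p q = (if p = q then 2 else A (fst p) (fst q))"

end

theory Submission
  imports Defs
begin

text \<open>Give every copy \<open>(i, m)\<close> the weight \<open>d i\<close> of a symmetrization of \<open>A\<close>: off the
  diagonal \<open>tilde_A A\<close> is \<open>A\<close> read at first components, and diagonal entries never
  obstruct symmetry of \<open>D M\<close>.\<close>

lemma symmetrizable_pullback:
  fixes f :: "'j \<Rightarrow> 'i"
  assumes "symmetrizable I A"
    and "f ` J \<subseteq> I"
    and "\<And>p q. p \<in> J \<Longrightarrow> q \<in> J \<Longrightarrow> p \<noteq> q \<Longrightarrow> M p q = A (f p) (f q)"
  shows "symmetrizable J M"
proof -
  obtain d where pos: "\<forall>i\<in>I. d i > 0"
    and sym: "\<forall>i\<in>I. \<forall>j\<in>I. d i * A i j = d j * A j i"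
    using assms(1) unfolding symmetrizable_def by blast
  show ?thesis
    unfolding symmetrizable_def
  proof (intro exI[of _ "d \<circ> f"] conjI ballI)
    fix p assume "p \<in> J"
    then show "(d \<circ> f) p > 0" using assms(2) pos by auto
  next
    fix p q assume "p \<in> J" "q \<in> J"
    then have "f p \<in> I" "f q \<in> I" using assms(2) by auto
    with \<open>p \<in> J\<close> \<open>q \<in> J\<close> show "(d \<circ> f) p * M p q = (d \<circ> f) q * M q p"
      using assms(3) sym by (cases "p = q") auto
  qed
qed

lemma fst_tilde_I_subset: "fst ` tilde_I I A \<subseteq> I"
  unfolding tilde_I_def I_re_def I_im_def by auto

theorem lemma4p1p1:
  fixes I :: "'i set" and A :: "'i \<Rightarrow> 'i \<Rightarrow> int"
  assumes "countable I"
    and "borcherds_cartan I A"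
    and "symmetrizable I A"
  shows "symmetrizable (tilde_I I A) (tilde_A A)"
  using assms(3) fst_tilde_I_subset by (rule symmetrizable_pullback) (simp add: tilde_A_def)

end
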